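(* Let $M=(m_{r,c})$ be the star matrix of a partition of the hypercube ${\bf Z}_q^n$ into subcubes all of the same dimension, let $i\ne j$ be two columns of $M$, and let $\pi$ be a permutation of ${\bf Z}_q$. Let $R$ be the set of all rows $r$ of $M$ such that both $m_{r,i}$ and $m_{r,j}$ belong to ${\bf Z}_q$. Then, as $r$ ranges over $R$, the value $(m_{r,i}+\pi(m_{r,j}))\bmod q$ takes each value of ${\bf Z}_q$ the same number of times.
   Context: A subcube of ${\bf Z}_q^n$ is obtained by fixing the values of some coordinates and letting the remaining coordinates run through all of ${\bf Z}_q$; its dimension is the number of free coordinates. Its star pattern is the vector of length $n$ over ${\bf Z}_q\cup\{*\}$ with the fixed value in each fixed coordinate and $*$ in each free coordinate. The star matrix of a partition of ${\bf Z}_q^n$ into subcubes (each vector lying in exactly one subcube) is the matrix whose rows are the star patterns of the subcubes of the partition. *)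

theory Defs
  imports Main
begin

text \<open>Star patterns are lists of length n over nat option: Some v is a fixed
  coordinate with value v < q, None is a free coordinate (star).\<close>

definition hypercube :: "nat \<Rightarrow> nat \<Rightarrow> nat list set" where
  "hypercube q n = {x. length x = n \<and> (\<forall>k<n. x ! k < q)}"

definition star_pattern :: "nat \<Rightarrow> nat \<Rightarrow> nat option list \<Rightarrow> bool" where
  "star_pattern q n p \<longleftrightarrow> length p = n \<and> (\<forall>k<n. \<forall>v. p ! k = Some v \<longrightarrow> v < q)"

definition subcube :: "nat \<Rightarrow> nat \<Rightarrow> nat option list \<Rightarrow> nat list set" where
  "subcube q n p = {x \<in> hypercube q n. \<forall>k<n. \<forall>v. p ! k = Some v \<longrightarrow> x ! k = v}"

definition subcube_dim :: "nat option list \<Rightarrow> nat" where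
  "subcube_dim p = card {k. k < length p \<and> p ! k = None}"

definition is_star_matrix_of_partition :: "nat \<Rightarrow> nat \<Rightarrow> nat option list set \<Rightarrow> bool" where
  "is_star_matrix_of_partition q n M \<longleftrightarrow>
     (\<forall>p\<in>M. star_pattern q n p) \<and>
     (\<forall>x\<in>hypercube q n. \<exists>!p. p \<in> M \<and> x \<in> subcube q n p)"

end

(* Let N c be the number of vectors x of the hypercube with (x_i + pi x_j) mod q = c, and
   call a subcube i,j-fixed if neither coordinate i nor j is a star.  The map
   (a, b) |-> (a + pi b) mod q is a Latin square: each of its rows and columns is a permutation
   of Z_q.  Hence in a subcube in which coordinate i or j is free, every choice of the other
   coordinates extends in exactly one way along the free one to a vector of value c, so such a
   subcube of dimension d meets every value class in q^(d-1) points; in particular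
   N c = q^(n-1).  An i,j-fixed subcube lies in a single value class.  Counting the class of c
   over the partition gives q^(n-1) = q^d R_c + q^(d-1) F, where R_c is the number of i,j-fixed
   rows of value c and F the number of the other rows, so R_c does not depend on c. *)
theory Submission
  imports Defs "HOL-Library.FuncSet" "HOL-Number_Theory.Cong"
begin

definition lists_with_nth_in :: "nat \<Rightarrow> (nat \<Rightarrow> 'a set) \<Rightarrow> 'a list set" where
  "lists_with_nth_in n S = {x. length x = n \<and> (\<forall>k<n. x ! k \<in> S k)}"

lemma bij_betw_lists_with_nth_in_PiE:
  "bij_betw (\<lambda>x. restrict ((!) x) {..<n}) (lists_with_nth_in n S) (\<Pi>\<^sub>E k\<in>{..<n}. S k)"
proof (rule bij_betw_imageI)
  show "inj_on (\<lambda>x. restrict ((!) x) {..<n}) (lists_with_nth_in n S)"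
  proof (rule inj_onI)
    fix x y
    assume "x \<in> lists_with_nth_in n S" "y \<in> lists_with_nth_in n S"
      and eq: "restrict ((!) x) {..<n} = restrict ((!) y) {..<n}"
    then have len: "length x = n" "length y = n"
      by (simp_all add: lists_with_nth_in_def)
    show "x = y"
    proof (rule nth_equalityI)
      show "length x = length y"
        using len by simp
      fix k assume "k < length x"
      then show "x ! k = y ! k"
        using fun_cong[OF eq, of k] len by simp
    qed
  qed
  show "(\<lambda>x. restrict ((!) x) {..<n}) ` lists_with_nth_in n S = (\<Pi>\<^sub>E k\<in>{..<n}. S k)"
  proof (intro equalityI subsetI)
    fix f assume "f \<in> (\<lambda>x. restrict ((!) x) {..<n}) ` lists_with_nth_in n S"
    then obtain x where "x \<in> lists_with_nth_in n S" "f = restrict ((!) x) {..<n}"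
      by blast
    then show "f \<in> (\<Pi>\<^sub>E k\<in>{..<n}. S k)"
      by (simp add: restrict_PiE_iff lists_with_nth_in_def)
  next
    fix f assume f: "f \<in> (\<Pi>\<^sub>E k\<in>{..<n}. S k)"
    have "map f [0..<n] \<in> lists_with_nth_in n S"
      using f by (simp add: lists_with_nth_in_def PiE_mem)
    moreover have "restrict ((!) (map f [0..<n])) {..<n} = f"
    proof
      fix k
      show "restrict ((!) (map f [0..<n])) {..<n} k = f k"
        by (cases "k < n") (simp_all add: PiE_arb[OF f])
    qed
    ultimately show "f \<in> (\<lambda>x. restrict ((!) x) {..<n}) ` lists_with_nth_in n S"
      by (blast intro: image_eqI[OF sym])
  qed
qed

lemma finite_lists_with_nth_in:
  assumes "\<And>k. k < n \<Longrightarrow> finite (S k)"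
  shows "finite (lists_with_nth_in n S)"
proof -
  have "finite (\<Pi>\<^sub>E k\<in>{..<n}. S k)"
    using assms by (intro finite_PiE) auto
  then show ?thesis
    using bij_betw_finite[OF bij_betw_lists_with_nth_in_PiE] by blast
qed

lemma card_lists_with_nth_in:
  "card (lists_with_nth_in n S) = (\<Prod>k<n. card (S k))"
  using bij_betw_same_card[OF bij_betw_lists_with_nth_in_PiE] by (simp add: card_PiE)

lemma card_eq_mult_card_unique_update:
  assumes "finite S"
    and in_range: "\<And>x. x \<in> S \<Longrightarrow> k < length x \<and> x ! k < q"
    and closed: "\<And>x v. x \<in> S \<Longrightarrow> v < q \<Longrightarrow> x[k := v] \<in> S"
    and unique: "\<And>x. x \<in> S \<Longrightarrow> \<exists>!v. v < q \<and> P (x[k := v])"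
  shows "card S = q * card {x \<in> S. P x}"
proof -
  let ?T = "{x \<in> S. P x}"
  define fibre where "fibre y = (\<lambda>v. y[k := v]) ` {..<q}" for y
  have S_eq: "S = (\<Union>y\<in>?T. fibre y)"
  proof (intro equalityI subsetI)
    fix x assume x: "x \<in> S"
    then obtain v where "v < q" "P (x[k := v])"
      using unique by blast
    then have "x[k := v] \<in> ?T"
      using closed x by blast
    moreover have "x = (x[k := v])[k := x ! k]" "x ! k < q"
      using in_range x by simp_all
    ultimately show "x \<in> (\<Union>y\<in>?T. fibre y)"
      unfolding fibre_def by blast
  qed (auto simp: fibre_def closed)
  have card_fibre: "card (fibre y) = q" if "y \<in> ?T" for y
  proof -
    have "inj_on (\<lambda>v. y[k := v]) {..<q}"
      using in_range that by (intro inj_onI) (metis (no_types, lifting) mem_Collect_eq nth_list_update_eq)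
    then show ?thesis
      by (simp add: fibre_def card_image)
  qed
  have disjoint: "fibre y \<inter> fibre y' = {}" if "y \<in> ?T" "y' \<in> ?T" "y \<noteq> y'" for y y'
  proof (rule ccontr)
    assume "fibre y \<inter> fibre y' \<noteq> {}"
    then obtain v v' where "y[k := v] = y'[k := v']"
      by (auto simp: fibre_def)
    then have y': "y' = y[k := y' ! k]"
      by (metis list_update_overwrite list_update_id)
    have "\<exists>!w. w < q \<and> P (y[k := w])"
      using unique that(1) by blast
    moreover have "y ! k < q \<and> P (y[k := y ! k])"
      using in_range that(1) by simp
    moreover have "y' ! k < q \<and> P (y[k := y' ! k])"
      using in_range that(2) y' by (metis (mono_tags, lifting) mem_Collect_eq)
    ultimately have "y ! k = y' ! k"
      by blast
    then show False
      using y' that(3) by (metis list_update_id)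
  qed
  have "card S = card (\<Union>y\<in>?T. fibre y)"
    using arg_cong[OF S_eq, of card] .
  also have "\<dots> = (\<Sum>y\<in>?T. card (fibre y))"
    using assms(1) disjoint by (intro card_UN_disjoint) (auto simp: fibre_def)
  also have "\<dots> = q * card ?T"
    using card_fibre by simp
  finally show ?thesis .
qed

definition subcube_coord :: "nat \<Rightarrow> nat option list \<Rightarrow> nat \<Rightarrow> nat set" where
  "subcube_coord q p k = (case p ! k of None \<Rightarrow> {..<q} | Some v \<Rightarrow> {v})"

lemma subcube_eq_lists_with_nth_in:
  assumes "star_pattern q n p"
  shows "subcube q n p = lists_with_nth_in n (subcube_coord q p)"
  using assms
  by (fastforce simp: subcube_def hypercube_def star_pattern_def lists_with_nth_in_def
      subcube_coord_def split: option.splits)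

lemma finite_subcube: "star_pattern q n p \<Longrightarrow> finite (subcube q n p)"
  by (simp add: subcube_eq_lists_with_nth_in finite_lists_with_nth_in subcube_coord_def
      split: option.split)

lemma card_subcube:
  assumes "star_pattern q n p"
  shows "card (subcube q n p) = q ^ subcube_dim p"
proof -
  have "card (subcube q n p) = (\<Prod>k<n. if p ! k = None then q else 1)"
    unfolding subcube_eq_lists_with_nth_in[OF assms] card_lists_with_nth_in
    by (intro prod.cong) (auto simp: subcube_coord_def split: option.split)
  also have "\<dots> = q ^ card {k \<in> {..<n}. p ! k = None}"
    by (simp add: prod.inter_filter[symmetric])
  also have "\<dots> = q ^ subcube_dim p"
    using assms by (simp add: subcube_dim_def star_pattern_def)
  finally show ?thesis .
qed

lemma star_pattern_replicate_None: "star_pattern q n (replicate n None)"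
  by (simp add: star_pattern_def)

lemma subcube_replicate_None: "subcube q n (replicate n None) = hypercube q n"
  by (auto simp: subcube_def)

lemma finite_star_matrix:
  assumes "is_star_matrix_of_partition q n M"
  shows "finite M"
proof (rule finite_subset)
  show "M \<subseteq> lists_with_nth_in n (\<lambda>_. insert None (Some ` {..<q}))"
  proof
    fix p assume "p \<in> M"
    then have "star_pattern q n p"
      using assms by (simp add: is_star_matrix_of_partition_def)
    then have "p ! k \<in> insert None (Some ` {..<q})" if "k < n" for k
      using that by (cases "p ! k") (auto simp: star_pattern_def)
    then show "p \<in> lists_with_nth_in n (\<lambda>_. insert None (Some ` {..<q}))"
      using \<open>star_pattern q n p\<close> by (simp add: star_pattern_def lists_with_nth_in_def)
  qed
  show "finite (lists_with_nth_in n (\<lambda>_. insert None (Some ` {..<q})))"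
    by (simp add: finite_lists_with_nth_in)
qed

lemma card_hypercube_filter_eq_sum:
  assumes "is_star_matrix_of_partition q n M"
  shows "card {x \<in> hypercube q n. P x} = (\<Sum>p\<in>M. card {x \<in> subcube q n p. P x})"
proof -
  have star: "\<And>p. p \<in> M \<Longrightarrow> star_pattern q n p"
    and unique: "\<And>x. x \<in> hypercube q n \<Longrightarrow> \<exists>!p. p \<in> M \<and> x \<in> subcube q n p"
    using assms by (auto simp: is_star_matrix_of_partition_def)
  have same_row: "p = p'" if "p \<in> M" "p' \<in> M" "x \<in> subcube q n p" "x \<in> subcube q n p'" for p p' x
  proof -
    have "x \<in> hypercube q n"
      using that(3) by (simp add: subcube_def)
    then show ?thesis
      using unique that by blast
  qed
  have "{x \<in> hypercube q n. P x} = (\<Union>p\<in>M. {x \<in> subcube q n p. P x})"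
  proof (intro equalityI subsetI)
    fix x assume x: "x \<in> {x \<in> hypercube q n. P x}"
    then obtain p where "p \<in> M" "x \<in> subcube q n p"
      using unique by blast
    with x show "x \<in> (\<Union>p\<in>M. {x \<in> subcube q n p. P x})"
      by blast
  qed (auto simp: subcube_def)
  also have "card \<dots> = (\<Sum>p\<in>M. card {x \<in> subcube q n p. P x})"
  proof (rule card_UN_disjoint)
    show "finite M"
      using finite_star_matrix[OF assms] .
    show "\<forall>p\<in>M. finite {x \<in> subcube q n p. P x}"
      using star finite_subcube by simp
    show "\<forall>p\<in>M. \<forall>p'\<in>M. p \<noteq> p' \<longrightarrow> {x \<in> subcube q n p. P x} \<inter> {x \<in> subcube q n p'. P x} = {}"
      using same_row by blast
  qed
  finally show ?thesis .
qed

definition latin_square :: "nat \<Rightarrow> (nat \<Rightarrow> nat \<Rightarrow> nat) \<Rightarrow> bool" where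
  "latin_square q L \<longleftrightarrow>
     (\<forall>a<q. bij_betw (L a) {..<q} {..<q}) \<and> (\<forall>b<q. bij_betw (\<lambda>a. L a b) {..<q} {..<q})"

lemma bij_betw_add_mod:
  fixes t :: nat
  shows "bij_betw (\<lambda>a. (a + t) mod q) {..<q} {..<q}"
proof -
  have "inj_on (\<lambda>a. (a + t) mod q) {..<q}"
  proof (rule inj_onI)
    fix a a' assume "a \<in> {..<q}" "a' \<in> {..<q}" "(a + t) mod q = (a' + t) mod q"
    then show "a = a'"
      using cong_add_rcancel_nat[of a t a' q] by (simp add: cong_def)
  qed
  moreover have "(\<lambda>a. (a + t) mod q) ` {..<q} \<subseteq> {..<q}"
    by auto
  ultimately show ?thesis
    by (simp add: bij_betw_def endo_inj_surj)
qed

lemma latin_square_add_mod_perm: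
  assumes "bij_betw \<pi> {..<q} {..<q}"
  shows "latin_square q (\<lambda>a b. (a + \<pi> b) mod q)"
  unfolding latin_square_def
proof (intro conjI allI impI)
  fix a
  show "bij_betw (\<lambda>b. (a + \<pi> b) mod q) {..<q} {..<q}"
    using bij_betw_trans[OF assms bij_betw_add_mod[of a q]] by (simp add: comp_def add.commute)
next
  fix b
  show "bij_betw (\<lambda>a. (a + \<pi> b) mod q) {..<q} {..<q}"
    by (rule bij_betw_add_mod)
qed

lemma bij_betw_ex1: "bij_betw f A B \<Longrightarrow> y \<in> B \<Longrightarrow> \<exists>!x. x \<in> A \<and> f x = y"
  unfolding bij_betw_def inj_on_def by blast

lemma card_subcube_eq_mult_card_latin_value:
  assumes "star_pattern q n p" "latin_square q L" "i < n" "j < n" "i \<noteq> j"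
    and "p ! i = None \<or> p ! j = None" "c < q"
  shows "card (subcube q n p) = q * card {x \<in> subcube q n p. L (x ! i) (x ! j) = c}"
proof -
  have coord: "k < length x \<and> x ! k < q" if "x \<in> subcube q n p" "k < n" for x k
    using that by (simp add: subcube_def hypercube_def)
  have update: "x[k := v] \<in> subcube q n p"
    if "x \<in> subcube q n p" "k < n" "p ! k = None" "v < q" for x k v
    using that by (auto simp: subcube_def hypercube_def nth_list_update)
  from assms(6) show ?thesis
  proof
    assume free: "p ! i = None"
    show ?thesis
    proof (rule card_eq_mult_card_unique_update[where k = i])
      fix x assume x: "x \<in> subcube q n p"
      have "bij_betw (\<lambda>a. L a (x ! j)) {..<q} {..<q}"
        using assms(2) coord[OF x assms(4)] by (simp add: latin_square_def)
      then have "\<exists>!v. v \<in> {..<q} \<and> L v (x ! j) = c"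
        by (rule bij_betw_ex1) (simp add: assms(7))
      then show "\<exists>!v. v < q \<and> L (x[i := v] ! i) (x[i := v] ! j) = c"
        using coord[OF x assms(3)] assms(5) by simp
    qed (use finite_subcube[OF assms(1)] coord update assms(3) free in auto)
  next
    assume free: "p ! j = None"
    show ?thesis
    proof (rule card_eq_mult_card_unique_update[where k = j])
      fix x assume x: "x \<in> subcube q n p"
      have "bij_betw (L (x ! i)) {..<q} {..<q}"
        using assms(2) coord[OF x assms(3)] by (simp add: latin_square_def)
      then have "\<exists>!v. v \<in> {..<q} \<and> L (x ! i) v = c"
        by (rule bij_betw_ex1) (simp add: assms(7))
      then show "\<exists>!v. v < q \<and> L (x[j := v] ! i) (x[j := v] ! j) = c"
        using coord[OF x assms(4)] assms(5) by simp
    qed (use finite_subcube[OF assms(1)] coord update assms(4) free in auto)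
  qed
qed

lemma mult_card_subcube_latin_value:
  assumes "star_pattern q n p" "latin_square q L" "i < n" "j < n" "i \<noteq> j" "c < q"
  shows "q * card {x \<in> subcube q n p. L (x ! i) (x ! j) = c}
       = (of_bool (p ! i \<noteq> None \<and> p ! j \<noteq> None \<and> L (the (p ! i)) (the (p ! j)) = c) * q
          + of_bool (p ! i = None \<or> p ! j = None)) * card (subcube q n p)"
proof (cases "p ! i = None \<or> p ! j = None")
  case True
  then show ?thesis
    using card_subcube_eq_mult_card_latin_value[OF assms(1-5) True assms(6)] by auto
next
  case False
  then obtain a b where ab: "p ! i = Some a" "p ! j = Some b"
    by auto
  then have "{x \<in> subcube q n p. L (x ! i) (x ! j) = c} = (if L a b = c then subcube q n p else {})"
    using assms(3,4) by (auto simp: subcube_def)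
  then show ?thesis
    using ab by simp
qed

lemma card_hypercube_eq_latin_value_count:
  assumes "is_star_matrix_of_partition q n M" "\<forall>p\<in>M. subcube_dim p = d"
    and "latin_square q L" "i < n" "j < n" "i \<noteq> j" "c < q"
  shows "card (hypercube q n)
       = q ^ Suc d * card {r \<in> M. r ! i \<noteq> None \<and> r ! j \<noteq> None \<and> L (the (r ! i)) (the (r ! j)) = c}
         + q ^ d * card {r \<in> M. r ! i = None \<or> r ! j = None}"
proof -
  have star: "\<And>p. p \<in> M \<Longrightarrow> star_pattern q n p"
    using assms(1) by (simp add: is_star_matrix_of_partition_def)
  have count: "(\<Sum>p\<in>M. of_bool (P p)) = card {p \<in> M. P p}" for P
    using finite_star_matrix[OF assms(1)] by (simp add: Int_def)
  let ?value_c = "\<lambda>x. L (x ! i) (x ! j) = c"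
  have "card (hypercube q n) = q * card {x \<in> hypercube q n. ?value_c x}"
    using card_subcube_eq_mult_card_latin_value[OF star_pattern_replicate_None assms(3-6) _ assms(7)]
      assms(4) by (simp add: subcube_replicate_None)
  also have "\<dots> = (\<Sum>p\<in>M. q * card {x \<in> subcube q n p. ?value_c x})"
    by (simp add: card_hypercube_filter_eq_sum[OF assms(1)] sum_distrib_left)
  also have "\<dots> = (\<Sum>p\<in>M. q ^ Suc d * of_bool (p ! i \<noteq> None \<and> p ! j \<noteq> None \<and> L (the (p ! i)) (the (p ! j)) = c)
                       + q ^ d * of_bool (p ! i = None \<or> p ! j = None))"
    by (intro sum.cong refl)
      (simp add: mult_card_subcube_latin_value[OF star assms(3-7)] card_subcube star assms(2) algebra_simps)
  also have "\<dots> = q ^ Suc d * card {r \<in> M. r ! i \<noteq> None \<and> r ! j \<noteq> None \<and> L (the (r ! i)) (the (r ! j)) = c}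
         + q ^ d * card {r \<in> M. r ! i = None \<or> r ! j = None}"
    by (simp only: sum.distrib sum_distrib_left[symmetric] count)
  finally show ?thesis .
qed

lemma card_latin_value_rows_eq:
  assumes "0 < q" "is_star_matrix_of_partition q n M" "\<forall>p\<in>M. subcube_dim p = d"
    and "latin_square q L" "i < n" "j < n" "i \<noteq> j" "a < q" "b < q"
  shows "card {r \<in> M. r ! i \<noteq> None \<and> r ! j \<noteq> None \<and> L (the (r ! i)) (the (r ! j)) = a}
       = card {r \<in> M. r ! i \<noteq> None \<and> r ! j \<noteq> None \<and> L (the (r ! i)) (the (r ! j)) = b}"
  using card_hypercube_eq_latin_value_count[OF assms(2-7) assms(8)]
    card_hypercube_eq_latin_value_count[OF assms(2-7) assms(9)] assms(1)
  by simp

theorem lemma3: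
  fixes q n :: nat and M :: "nat option list set" and i j :: nat and \<pi> :: "nat \<Rightarrow> nat"
  assumes "0 < q"
    and "is_star_matrix_of_partition q n M"
    and "\<exists>d. \<forall>p\<in>M. subcube_dim p = d"
    and "i < n" and "j < n" and "i \<noteq> j"
    and "bij_betw \<pi> {..<q} {..<q}"
  defines "R \<equiv> {r \<in> M. r ! i \<noteq> None \<and> r ! j \<noteq> None}"
  shows "\<forall>a<q. \<forall>b<q.
           card {r \<in> R. (the (r ! i) + \<pi> (the (r ! j))) mod q = a}
         = card {r \<in> R. (the (r ! i) + \<pi> (the (r ! j))) mod q = b}"
proof (intro allI impI)
  fix a b assume "a < q" "b < q"
  obtain d where "\<forall>p\<in>M. subcube_dim p = d"
    using assms(3) by blast
  from card_latin_value_rows_eq[OF assms(1,2) this latin_square_add_mod_perm[OF assms(7)]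
      assms(4-6) \<open>a < q\<close> \<open>b < q\<close>]
  show "card {r \<in> R. (the (r ! i) + \<pi> (the (r ! j))) mod q = a}
      = card {r \<in> R. (the (r ! i) + \<pi> (the (r ! j))) mod q = b}"
    unfolding R_def by (simp add: conj_assoc)
qed

end
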